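(* Let $p>0$ and suppose $\mathbb{E}|Y_0|^p<\infty$ and $\mathbb{E}|\varepsilon_1|^p<\infty$. Consider the TAR(1) model $Y_t=Y_{t-1}+\varepsilon_t$ if $Y_{t-1}>r$, $Y_t=\beta Y_{t-1}+\varepsilon_t$ if $Y_{t-1}\le r$ ($t\ge1$), with $\beta<1$ and $r\in\mathbb{R}$. Then there is a constant $C$ (depending only on $p,\beta,r$, not on $n$ or on the event) such that for every $n\ge 0$ and every event $A$, $$\mathbb{E}|Y_n|^pI\{Y_n\le r, A\}\le C\Big(\sup_k\mathbb{E}|\varepsilon_k|^pI\{A\}+\mathbb{E}|Y_0|^pI\{A\}+\mathbb{P}(A)\Big).$$
   Context: Standing assumptions: $\{\varepsilon_t\}_{t\ge1}$ is an i.i.d. sequence of real random variables with $\mathbb{E}\varepsilon_1=0$ and $\mathbb{E}\varepsilon_1^2=\sigma^2\in(0,\infty)$; the initial value $Y_0$ is a random variable independent of $\{\varepsilon_t\}_{t\ge1}$. $I\{\cdot\}$ denotes an indicator, and $I\{Y_n\le r,A\}$ the indicator of $\{Y_n\le r\}\cap A$. *)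

theory Defs
  imports "HOL-Probability.Probability"
begin

primrec tarY :: "real \<Rightarrow> real \<Rightarrow> ('a \<Rightarrow> real) \<Rightarrow> (nat \<Rightarrow> 'a \<Rightarrow> real) \<Rightarrow> nat \<Rightarrow> 'a \<Rightarrow> real" where
  "tarY \<beta> r Y0 eps 0 x = Y0 x"
| "tarY \<beta> r Y0 eps (Suc t) x =
     (if tarY \<beta> r Y0 eps t x > r then tarY \<beta> r Y0 eps t x + eps (Suc t) x
      else \<beta> * tarY \<beta> r Y0 eps t x + eps (Suc t) x)"

end

theory Submission imports Defs begin

(* The bound is pathwise; independence of Y_0 and the innovations is used only to know
   that they are random variables.  Write c = max beta 0 < 1 and K = (|beta| + 1) |r|.
   (1) On the event {Y_n <= r} one has |Y_n| <= sum_{j<=n} c^(n-j) V_j with V_0 = |Y_0| and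
       V_j = K + |eps_j| (tar_weight, tarY_abs_le_geometric_sum): in the regime Y > r the
       process restarts from a bounded value, in the regime Y <= r it contracts by beta.
   (2) With d = sqrt c a largest-term argument turns this into
       |Y_n|^p <= (1-d)^(-p) sum_j (d^p)^(n-j) V_j^p for every p > 0
       (geometric_sum_powr_le, tarY_powr_le).
   (3) Each E V_j^p I{A} is at most 2^p (K^p + 1) times the right-hand side of the theorem
       (tar_weight_moment_le), and a geometric combination of integrals with ratio d^p < 1
       costs only the factor 1/(1-d^p) (nn_integral_geometric_sum_le). *)

text \<open>The nonnegative weights driving the pathwise bound: the initial value, and for
  j \<ge> 1 the j-th innovation enlarged by the restart level of the unit-root regime.\<close>
definition tar_weight :: "real \<Rightarrow> real \<Rightarrow> ('a \<Rightarrow> real) \<Rightarrow> (nat \<Rightarrow> 'a \<Rightarrow> real) \<Rightarrow> nat \<Rightarrow> 'a \<Rightarrow> real"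
  where "tar_weight \<beta> r Y0 eps j x = (if j = 0 then \<bar>Y0 x\<bar> else (\<bar>\<beta>\<bar> + 1) * \<bar>r\<bar> + \<bar>eps j x\<bar>)"

lemma tar_weight_nonneg: "0 \<le> tar_weight \<beta> r Y0 eps j x"
  by (simp add: tar_weight_def)

lemma geometric_sum_le:
  assumes "0 \<le> (d::real)" "d < 1"
  shows "(\<Sum>j\<le>n. d^(n-j)) \<le> 1/(1-d)"
proof (induction n)
  case 0 then show ?case using assms by (simp add: field_simps)
next
  case (Suc n)
  have "(\<Sum>j\<le>Suc n. d^(Suc n-j)) = d * (\<Sum>j\<le>n. d^(n-j)) + 1"
    by (simp add: sum_distrib_left Suc_diff_le)
  also have "\<dots> \<le> d * (1/(1-d)) + 1" using mult_left_mono[OF Suc.IH assms(1)] by simp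
  also have "\<dots> = 1/(1-d)" using assms by (simp add: field_simps)
  finally show ?case .
qed

text \<open>The induction keeps the
  bound only on that event; leaving the event through the regime Y > r costs at most
  |r| + |eps|, and through the regime Y \<le> r with negative beta at most |beta r| + |r| + |eps|.\<close>
lemma tarY_abs_le_geometric_sum:
  assumes "\<beta> < 1" and "tarY \<beta> r Y0 eps n x \<le> r"
  shows "\<bar>tarY \<beta> r Y0 eps n x\<bar> \<le> (\<Sum>j\<le>n. (max \<beta> 0)^(n-j) * tar_weight \<beta> r Y0 eps j x)"
  using assms(2)
proof (induction n)
  case 0 then show ?case by (simp add: tar_weight_def)
next
  case (Suc n)
  define c where "c = max \<beta> 0"
  let ?y = "tarY \<beta> r Y0 eps n x" and ?e = "eps (Suc n) x"
  let ?S = "\<Sum>j\<le>n. c^(n-j) * tar_weight \<beta> r Y0 eps j x"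
  have S_nonneg: "0 \<le> c * ?S"
    by (intro mult_nonneg_nonneg sum_nonneg) (simp_all add: c_def tar_weight_nonneg)
  have weight: "tar_weight \<beta> r Y0 eps (Suc n) x = (\<bar>\<beta>\<bar> + 1) * \<bar>r\<bar> + \<bar>?e\<bar>"
    by (simp add: tar_weight_def)
  have step: "\<bar>tarY \<beta> r Y0 eps (Suc n) x\<bar> \<le> c * ?S + (\<bar>\<beta>\<bar> + 1) * \<bar>r\<bar> + \<bar>?e\<bar>"
  proof (cases "?y > r")
    case True
    then have "tarY \<beta> r Y0 eps (Suc n) x = ?y + ?e" by simp
    then have "\<bar>tarY \<beta> r Y0 eps (Suc n) x\<bar> \<le> \<bar>r\<bar> + \<bar>?e\<bar>" using Suc.prems True by auto
    moreover have "0 \<le> \<bar>\<beta>\<bar> * \<bar>r\<bar>" by simp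
    ultimately show ?thesis using S_nonneg by (simp only: distrib_right mult_1_left)
  next
    case False
    then have Y: "tarY \<beta> r Y0 eps (Suc n) x = \<beta> * ?y + ?e" by simp
    show ?thesis
    proof (cases "\<beta> \<ge> 0")
      case True
      then have "\<bar>?y\<bar> \<le> ?S" using Suc.IH False by (simp add: c_def)
      then have "\<beta> * \<bar>?y\<bar> \<le> c * ?S" using True by (simp add: c_def mult_left_mono)
      moreover have "\<bar>\<beta> * ?y + ?e\<bar> \<le> \<beta> * \<bar>?y\<bar> + \<bar>?e\<bar>"
        using abs_triangle_ineq[of "\<beta> * ?y" ?e] True by (simp add: abs_mult)
      moreover have "0 \<le> (\<bar>\<beta>\<bar> + 1) * \<bar>r\<bar>" by simp
      ultimately show ?thesis unfolding Y by linarith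
    next
      case False
      then have "\<beta> * r \<le> \<beta> * ?y" using \<open>\<not> ?y > r\<close> by (simp add: mult_left_mono_neg)
      moreover have "\<beta> * ?y + ?e \<le> r" using Suc.prems Y by simp
      ultimately have "\<bar>\<beta> * ?y + ?e\<bar> \<le> \<bar>\<beta> * r\<bar> + \<bar>r\<bar> + \<bar>?e\<bar>" by linarith
      then show ?thesis using Y S_nonneg by (simp add: abs_mult distrib_right)
    qed
  qed
  have "(\<Sum>j\<le>Suc n. c^(Suc n-j) * tar_weight \<beta> r Y0 eps j x)
      = c * ?S + tar_weight \<beta> r Y0 eps (Suc n) x"
    by (simp add: sum_distrib_left Suc_diff_le mult.assoc)
  then show ?case using step weight by (simp add: c_def)
qed

lemma power_powr: "0 \<le> (d::real) \<Longrightarrow> (d^k) powr p = (d powr p)^k"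
  by (induction k) (auto simp: powr_mult)

text \<open>Step (2): the p-th power of a sum with geometric weights d^2 is controlled by the
  geometric sum of p-th powers with ratio d^p.  Writing the weight as d^(n-j) d^(n-j), one
  factor is summed geometrically and the other is absorbed by the largest term.\<close>
lemma geometric_sum_powr_le:
  fixes x :: "nat \<Rightarrow> real"
  assumes x: "\<And>j. 0 \<le> x j" and d: "0 \<le> d" "d < 1" and p: "0 < p"
  shows "(\<Sum>j\<le>n. (d^2)^(n-j) * x j) powr p
     \<le> (1/(1-d)) powr p * (\<Sum>j\<le>n. (d powr p)^(n-j) * x j powr p)"
proof -
  define y where "y j = d^(n-j) * x j" for j
  have "Max (y ` {..n}) \<in> y ` {..n}" by (rule Max_in) auto
  then obtain j0 where j0: "j0 \<le> n" "y j0 = Max (y ` {..n})" by (metis atMost_iff imageE)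
  have max: "y j \<le> y j0" if "j \<le> n" for j using that j0(2) by simp
  have y0: "0 \<le> y j0" by (simp add: y_def x d)
  have "(\<Sum>j\<le>n. (d^2)^(n-j) * x j) = (\<Sum>j\<le>n. d^(n-j) * y j)"
    by (simp add: y_def power2_eq_square power_mult_distrib mult.assoc)
  also have "\<dots> \<le> (\<Sum>j\<le>n. d^(n-j) * y j0)"
    by (rule sum_mono) (simp add: mult_left_mono max d)
  also have "\<dots> = y j0 * (\<Sum>j\<le>n. d^(n-j))" by (simp add: sum_distrib_left mult.commute)
  also have "\<dots> \<le> y j0 * (1/(1-d))" using geometric_sum_le[OF d] y0 by (rule mult_left_mono)
  finally have sum_le: "(\<Sum>j\<le>n. (d^2)^(n-j) * x j) \<le> y j0 * (1/(1-d))" .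
  have "(\<Sum>j\<le>n. (d^2)^(n-j) * x j) powr p \<le> (y j0 * (1/(1-d))) powr p"
    by (rule powr_mono2) (use p sum_le x d in \<open>auto intro!: sum_nonneg\<close>)
  also have "\<dots> = (1/(1-d)) powr p * ((d powr p)^(n-j0) * x j0 powr p)"
    using y0 d x by (simp add: powr_divide y_def powr_mult power_powr)
  also have "\<dots> \<le> (1/(1-d)) powr p * (\<Sum>j\<le>n. (d powr p)^(n-j) * x j powr p)"
    by (intro mult_left_mono member_le_sum[where f="\<lambda>j. (d powr p)^(n-j) * x j powr p"])
       (use j0 in auto)
  finally show ?thesis .
qed

lemma powr_add_le:
  assumes "0 \<le> (a::real)" "0 \<le> b" "0 < p"
  shows "(a + b) powr p \<le> 2 powr p * (a powr p + b powr p)"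
proof -
  have "(a+b) powr p \<le> (2 * max a b) powr p"
    by (rule powr_mono2) (use assms in auto)
  also have "\<dots> = 2 powr p * max a b powr p" using assms by (simp add: powr_mult)
  also have "max a b powr p \<le> a powr p + b powr p" by (simp add: max_def)
  finally show ?thesis by simp
qed

lemma tarY_powr_le:
  assumes "\<beta> < 1" "0 < p" "tarY \<beta> r Y0 eps n x \<le> r"
  defines "d \<equiv> sqrt (max \<beta> 0)"
  shows "\<bar>tarY \<beta> r Y0 eps n x\<bar> powr p
     \<le> (1/(1-d)) powr p * (\<Sum>j\<le>n. (d powr p)^(n-j) * tar_weight \<beta> r Y0 eps j x powr p)"
proof -
  have d: "0 \<le> d" "d < 1" "d^2 = max \<beta> 0" using assms(1) by (auto simp: d_def)
  have "\<bar>tarY \<beta> r Y0 eps n x\<bar> powr p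
      \<le> (\<Sum>j\<le>n. (d^2)^(n-j) * tar_weight \<beta> r Y0 eps j x) powr p"
    using tarY_abs_le_geometric_sum[OF assms(1,3)] assms(2) d(3) by (intro powr_mono2) auto
  also have "\<dots> \<le> (1/(1-d)) powr p * (\<Sum>j\<le>n. (d powr p)^(n-j) * tar_weight \<beta> r Y0 eps j x powr p)"
    by (rule geometric_sum_powr_le) (use d assms(2) tar_weight_nonneg in auto)
  finally show ?thesis .
qed

lemma tar_weight_moment_le:
  fixes M :: "'a measure" and Y0 :: "'a \<Rightarrow> real" and eps :: "nat \<Rightarrow> 'a \<Rightarrow> real"
  assumes A: "A \<in> sets M" and p: "0 < p"
    and eps_meas: "\<And>k. 1 \<le> k \<Longrightarrow> eps k \<in> borel_measurable M"
  defines "R \<equiv> (SUP k\<in>{1..}. \<integral>\<^sup>+x. ennreal (\<bar>eps k x\<bar> powr p * indicator A x) \<partial>M)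
                + (\<integral>\<^sup>+x. ennreal (\<bar>Y0 x\<bar> powr p * indicator A x) \<partial>M) + emeasure M A"
  shows "(\<integral>\<^sup>+x. ennreal (tar_weight \<beta> r Y0 eps j x powr p * indicator A x) \<partial>M)
       \<le> ennreal (2 powr p * (((\<bar>\<beta>\<bar> + 1) * \<bar>r\<bar>) powr p + 1)) * R"
proof -
  define K where "K = (\<bar>\<beta>\<bar> + 1) * \<bar>r\<bar>"
  define Q where "Q = 2 powr p * (K powr p + 1)"
  have Q1: "1 \<le> Q"
    using p ge_one_powr_ge_zero[of 2 p] mult_mono[of 1 "2 powr p" 1 "K powr p + 1"]
    by (simp add: Q_def)
  show ?thesis
  proof (cases "j = 0")
    case True
    have "(\<integral>\<^sup>+x. ennreal (tar_weight \<beta> r Y0 eps j x powr p * indicator A x) \<partial>M)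
        = (\<integral>\<^sup>+x. ennreal (\<bar>Y0 x\<bar> powr p * indicator A x) \<partial>M)"
      using True by (simp add: tar_weight_def)
    also have "\<dots> \<le> ennreal 1 * R" by (simp add: R_def add_increasing2 add_increasing)
    also have "\<dots> \<le> ennreal Q * R" using Q1 by (intro mult_right_mono ennreal_leI) auto
    finally show ?thesis by (simp add: Q_def K_def)
  next
    case False
    let ?E = "\<lambda>x. ennreal (\<bar>eps j x\<bar> powr p * indicator A x)"
    have pointwise: "ennreal (tar_weight \<beta> r Y0 eps j x powr p * indicator A x)
        \<le> ennreal (2 powr p * K powr p) * indicator A x + ennreal (2 powr p) * ?E x" for x
    proof (cases "x \<in> A")
      case True
      have "(K + \<bar>eps j x\<bar>) powr p \<le> 2 powr p * (K powr p + \<bar>eps j x\<bar> powr p)"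
        by (rule powr_add_le) (use p in \<open>auto simp: K_def\<close>)
      then show ?thesis using True False
        by (simp add: tar_weight_def K_def distrib_left ennreal_plus[symmetric]
                      ennreal_mult[symmetric] del: ennreal_plus)
    qed simp
    have E_le: "(\<integral>\<^sup>+x. ?E x \<partial>M) \<le> R"
      unfolding R_def using False by (intro add_increasing2 SUP_upper) auto
    have "(\<integral>\<^sup>+x. ennreal (tar_weight \<beta> r Y0 eps j x powr p * indicator A x) \<partial>M)
        \<le> (\<integral>\<^sup>+x. ennreal (2 powr p * K powr p) * indicator A x + ennreal (2 powr p) * ?E x \<partial>M)"
      by (intro nn_integral_mono pointwise)
    also have "\<dots> = ennreal (2 powr p * K powr p) * emeasure M A + ennreal (2 powr p) * (\<integral>\<^sup>+x. ?E x \<partial>M)"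
      using A eps_meas[of j] False by (simp add: nn_integral_add nn_integral_cmult)
    also have "\<dots> \<le> ennreal (2 powr p * K powr p) * R + ennreal (2 powr p) * R"
      using E_le by (intro add_mono mult_left_mono) (auto simp: R_def add_increasing)
    also have "\<dots> = ennreal Q * R"
      by (simp add: Q_def distrib_left distrib_right)
    finally show ?thesis by (simp add: Q_def K_def)
  qed
qed

lemma nn_integral_geometric_sum_le:
  fixes g :: "nat \<Rightarrow> 'a \<Rightarrow> real"
  assumes e: "0 \<le> e" "e < 1"
    and g_nonneg: "\<And>j x. 0 \<le> g j x" and g_meas: "\<And>j. g j \<in> borel_measurable M"
    and g_bound: "\<And>j. (\<integral>\<^sup>+x. ennreal (g j x) \<partial>M) \<le> R"
  shows "(\<integral>\<^sup>+x. ennreal (\<Sum>j\<le>n. e^(n-j) * g j x) \<partial>M) \<le> ennreal (1/(1-e)) * R"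
proof -
  have split: "ennreal (\<Sum>j\<le>n. e^(n-j) * g j x) = (\<Sum>j\<le>n. ennreal (e^(n-j)) * ennreal (g j x))" for x
    using e g_nonneg by (simp add: sum_ennreal[symmetric] ennreal_mult)
  have "(\<integral>\<^sup>+x. ennreal (\<Sum>j\<le>n. e^(n-j) * g j x) \<partial>M)
      = (\<Sum>j\<le>n. ennreal (e^(n-j)) * (\<integral>\<^sup>+x. ennreal (g j x) \<partial>M))"
    unfolding split using g_meas by (simp add: nn_integral_sum nn_integral_cmult)
  also have "\<dots> \<le> (\<Sum>j\<le>n. ennreal (e^(n-j)) * R)"
    by (intro sum_mono mult_left_mono g_bound) auto
  also have "\<dots> = ennreal (\<Sum>j\<le>n. e^(n-j)) * R"
    using e by (simp only: sum_distrib_right[symmetric] sum_ennreal zero_le_power)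
  also have "\<dots> \<le> ennreal (1/(1-e)) * R"
    using geometric_sum_le[OF e] by (intro mult_right_mono ennreal_leI) auto
  finally show ?thesis .
qed

definition tar_const :: "real \<Rightarrow> real \<Rightarrow> real \<Rightarrow> real" where
  "tar_const p \<beta> r = (1/(1 - sqrt (max \<beta> 0))) powr p * (1/(1 - sqrt (max \<beta> 0) powr p))
                       * (2 powr p * (((\<bar>\<beta>\<bar> + 1) * \<bar>r\<bar>) powr p + 1))"

lemma tarY_restricted_moment_le:
  fixes M :: "'a measure" and Y0 :: "'a \<Rightarrow> real" and eps :: "nat \<Rightarrow> 'a \<Rightarrow> real"
  assumes "\<beta> < 1" "0 < p" and A: "A \<in> sets M"
    and Y0_meas: "Y0 \<in> borel_measurable M"
    and eps_meas: "\<And>k. 1 \<le> k \<Longrightarrow> eps k \<in> borel_measurable M"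
  shows "(\<integral>\<^sup>+x. ennreal (\<bar>tarY \<beta> r Y0 eps n x\<bar> powr p
                      * indicator ({y. tarY \<beta> r Y0 eps n y \<le> r} \<inter> A) x) \<partial>M)
    \<le> ennreal (tar_const p \<beta> r)
       * ((SUP k\<in>{1..}. \<integral>\<^sup>+x. ennreal (\<bar>eps k x\<bar> powr p * indicator A x) \<partial>M)
          + (\<integral>\<^sup>+x. ennreal (\<bar>Y0 x\<bar> powr p * indicator A x) \<partial>M) + emeasure M A)"
    (is "?L \<le> _ * ?R")
proof -
  define d where "d = sqrt (max \<beta> 0)"
  define e where "e = d powr p"
  define B where "B = (1/(1-d)) powr p"
  define Q where "Q = 2 powr p * (((\<bar>\<beta>\<bar> + 1) * \<bar>r\<bar>) powr p + 1)"
  have d: "0 \<le> d" "d < 1" using assms(1) by (auto simp: d_def)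
  have e: "0 \<le> e" "e < 1"
    using d assms(2) powr_less_mono2[of p d 1] by (auto simp: e_def)
  have BQ: "0 \<le> B" "0 \<le> 1/(1-e)" "0 \<le> Q" using e by (auto simp: B_def Q_def)
  define g where "g j x = tar_weight \<beta> r Y0 eps j x powr p * indicator A x" for j x
  have g_meas[measurable]: "g j \<in> borel_measurable M" for j
    using Y0_meas eps_meas[of j] A unfolding g_def tar_weight_def
    by (cases "j = 0") (simp_all, measurable)
  have moments: "(\<integral>\<^sup>+x. ennreal (g j x) \<partial>M) \<le> ennreal Q * ?R" for j
    unfolding g_def Q_def using A assms(2) eps_meas by (rule tar_weight_moment_le)
  have pointwise: "ennreal (\<bar>tarY \<beta> r Y0 eps n x\<bar> powr p * indicator ({y. tarY \<beta> r Y0 eps n y \<le> r} \<inter> A) x)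
      \<le> ennreal B * ennreal (\<Sum>j\<le>n. e^(n-j) * g j x)" for x
  proof (cases "x \<in> A \<and> tarY \<beta> r Y0 eps n x \<le> r")
    case True
    then have "\<bar>tarY \<beta> r Y0 eps n x\<bar> powr p \<le> B * (\<Sum>j\<le>n. e^(n-j) * g j x)"
      using tarY_powr_le[OF assms(1,2) conjunct2[OF True]] conjunct1[OF True]
      by (simp add: g_def e_def B_def d_def)
    then show ?thesis using True BQ by (simp add: ennreal_mult'[symmetric] ennreal_leI)
  qed auto
  have "?L \<le> (\<integral>\<^sup>+x. ennreal B * ennreal (\<Sum>j\<le>n. e^(n-j) * g j x) \<partial>M)"
    by (intro nn_integral_mono pointwise)
  also have "\<dots> = ennreal B * (\<integral>\<^sup>+x. ennreal (\<Sum>j\<le>n. e^(n-j) * g j x) \<partial>M)"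
    by (rule nn_integral_cmult) measurable
  also have "\<dots> \<le> ennreal B * (ennreal (1/(1-e)) * (ennreal Q * ?R))"
    using nn_integral_geometric_sum_le[OF e _ g_meas moments]
    by (intro mult_left_mono) (auto simp: g_def tar_weight_nonneg)
  also have "\<dots> = ennreal (B * (1/(1-e)) * Q) * ?R"
    using BQ by (simp only: ennreal_mult mult_nonneg_nonneg mult.assoc)
  finally show ?thesis by (simp add: tar_const_def B_def e_def d_def Q_def)
qed

text \<open>Lemma 3.1.\<close>
theorem lemma3p1:
  fixes p \<beta> r :: real
  assumes "p > 0" and "\<beta> < 1"
  shows "\<exists>C::real. \<forall>(M :: 'a measure) (Y0 :: 'a \<Rightarrow> real) (eps :: nat \<Rightarrow> 'a \<Rightarrow> real).
    (prob_space M
     \<and> prob_space.indep_vars M (\<lambda>_. borel) (\<lambda>i. if i = 0 then Y0 else eps i) UNIV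
     \<and> (\<forall>k\<ge>1. distr M borel (eps k) = distr M borel (eps 1))
     \<and> integrable M (eps 1) \<and> (\<integral>x. eps 1 x \<partial>M) = 0
     \<and> integrable M (\<lambda>x. (eps 1 x)\<^sup>2) \<and> (\<integral>x. (eps 1 x)\<^sup>2 \<partial>M) > 0
     \<and> (\<integral>\<^sup>+x. ennreal (\<bar>Y0 x\<bar> powr p) \<partial>M) < \<infinity>
     \<and> (\<integral>\<^sup>+x. ennreal (\<bar>eps 1 x\<bar> powr p) \<partial>M) < \<infinity>)
    \<longrightarrow> (\<forall>n. \<forall>A \<in> sets M.
          (\<integral>\<^sup>+x. ennreal (\<bar>tarY \<beta> r Y0 eps n x\<bar> powr p
                      * indicator ({y. tarY \<beta> r Y0 eps n y \<le> r} \<inter> A) x) \<partial>M)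
          \<le> ennreal C * ((SUP k\<in>{1..}. \<integral>\<^sup>+x. ennreal (\<bar>eps k x\<bar> powr p * indicator A x) \<partial>M)
                        + (\<integral>\<^sup>+x. ennreal (\<bar>Y0 x\<bar> powr p * indicator A x) \<partial>M)
                        + emeasure M A))"
proof (rule exI[of _ "tar_const p \<beta> r"], intro allI impI ballI, elim conjE)
  fix M :: "'a measure" and Y0 :: "'a \<Rightarrow> real" and eps :: "nat \<Rightarrow> 'a \<Rightarrow> real"
    and n :: nat and A :: "'a set"
  assume "prob_space M"
    and indep: "prob_space.indep_vars M (\<lambda>_. borel) (\<lambda>i. if i = 0 then Y0 else eps i) UNIV"
    and A: "A \<in> sets M"
  interpret prob_space M by fact
  have rv: "(if i = 0 then Y0 else eps i) \<in> borel_measurable M" for i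
    using indep unfolding indep_vars_def2 by blast
  have "eps k \<in> borel_measurable M" if "1 \<le> k" for k
    using rv[of k] that by (simp add: not_less_eq_eq[symmetric])
  with rv[of 0] show "(\<integral>\<^sup>+x. ennreal (\<bar>tarY \<beta> r Y0 eps n x\<bar> powr p
                      * indicator ({y. tarY \<beta> r Y0 eps n y \<le> r} \<inter> A) x) \<partial>M)
    \<le> ennreal (tar_const p \<beta> r)
       * ((SUP k\<in>{1..}. \<integral>\<^sup>+x. ennreal (\<bar>eps k x\<bar> powr p * indicator A x) \<partial>M)
          + (\<integral>\<^sup>+x. ennreal (\<bar>Y0 x\<bar> powr p * indicator A x) \<partial>M) + emeasure M A)"
    using tarY_restricted_moment_le[OF assms(2,1) A] by simp
qed

end
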